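(* Let $(V,h)$ and $(V',h')$ be finite-dimensional $\epsilon$-hermitian spaces with respect to $(F,\rho)$, let $n$ be a positive integer, let $\Lambda$ be a self-dual lattice sequence in $(V,h)$, and let $f:V\to V'$ be an $F$-linear isomorphism such that the lattice sequence $f(\Lambda):s\mapsto f(\Lambda_s)$ is self-dual in $(V',h')$ and $$\sigma_{h,h'}(f)\in\tilde{\mathrm U}^n(\Lambda)\,f^{-1}\,\tilde{\mathrm U}^n(f(\Lambda)).$$ Then there is an isometry $\phi:(V,h)\to(V',h')$ of $\epsilon$-hermitian spaces contained in $\tilde{\mathrm U}^n(f(\Lambda))\,f\,\tilde{\mathrm U}^n(\Lambda)$.
   Context: $F$ is a nonarchimedean local field of odd residual characteristic (valuation ring $o_F$, maximal ideal $\mathfrak p_F$), $\rho$ an automorphism of $F$ with $\rho^2=\mathrm{id}$, $\epsilon\in\{\pm1\}$. An $\epsilon$-hermitian space w.r.t. $(F,\rho)$ is a finite-dimensional right $F$-vector space with nondegenerate biadditive $h$ satisfying $h(v_1x,v_2y)=\rho(x)\epsilon\rho(h(v_2,v_1))y$. An $o_F$-lattice sequence $\Lambda$ in $V$ is a map from $\mathbb Z$ to full-rank $o_F$-lattices in $V$, decreasing ($\Lambda_s\subseteq\Lambda_t$ for $s>t$), with $\Lambda_s\pi=\Lambda_{s+e}$ for some fixed $e\ge1$ and a uniformizer $\pi$; $M^{\#}=\{v:h(v,M)\subseteq\mathfrak p_F\}$, and $\Lambda$ is self-dual if $(\Lambda_s)^{\#}=\Lambda_{u-s}$ for some $u$ and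 all $s$. For a lattice sequence $\Lambda$ in $V$, $\mathfrak a_n(\Lambda)=\{a\in\mathrm{End}_F(V): a\Lambda_s\subseteq\Lambda_{s+n}\ \forall s\}$ and $\tilde{\mathrm U}^n(\Lambda)=1+\mathfrak a_n(\Lambda)$ for $n\ge1$. For $f\in\mathrm{Hom}_F(V,V')$, $\sigma_{h,h'}(f)\in\mathrm{Hom}_F(V',V)$ is defined by $h'(f(v),w)=h(v,\sigma_{h,h'}(f)(w))$ for all $v\in V$, $w\in V'$. *)

theory Defs
  imports Complex_Main
begin

text \<open>A normalized discrete valuation on a field, given by its values on nonzero
  elements (the value at 0, i.e. +infinity, is never used).\<close>
definition discrete_valuation :: "('a::field \<Rightarrow> int) \<Rightarrow> bool" where
  "discrete_valuation v \<longleftrightarrow>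
     (\<forall>x y. x \<noteq> 0 \<longrightarrow> y \<noteq> 0 \<longrightarrow> v (x * y) = v x + v y) \<and>
     (\<forall>x y. x \<noteq> 0 \<longrightarrow> y \<noteq> 0 \<longrightarrow> x + y \<noteq> 0 \<longrightarrow> v (x + y) \<ge> min (v x) (v y)) \<and>
     (\<exists>p. p \<noteq> 0 \<and> v p = 1)"

definition val_ge :: "('a::field \<Rightarrow> int) \<Rightarrow> int \<Rightarrow> 'a set" where
  "val_ge v k = {x. x = 0 \<or> v x \<ge> k}"

abbreviation val_ring :: "('a::field \<Rightarrow> int) \<Rightarrow> 'a set" where
  "val_ring v \<equiv> val_ge v 0"

abbreviation val_ideal :: "('a::field \<Rightarrow> int) \<Rightarrow> 'a set" where
  "val_ideal v \<equiv> val_ge v 1"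

definition val_complete :: "('a::field \<Rightarrow> int) \<Rightarrow> bool" where
  "val_complete v \<longleftrightarrow>
     (\<forall>x :: nat \<Rightarrow> 'a.
        (\<forall>k. \<exists>N. \<forall>m\<ge>N. \<forall>m'\<ge>N. x m - x m' \<in> val_ge v k) \<longrightarrow>
        (\<exists>L. \<forall>k. \<exists>N. \<forall>m\<ge>N. x m - L \<in> val_ge v k))"

definition finite_residue_field :: "('a::field \<Rightarrow> int) \<Rightarrow> bool" where
  "finite_residue_field v \<longleftrightarrow>
     (\<exists>S. finite S \<and> S \<subseteq> val_ring v \<and> (\<forall>x\<in>val_ring v. \<exists>s\<in>S. x - s \<in> val_ideal v))"

definition nonarch_local_field :: "('a::field \<Rightarrow> int) \<Rightarrow> bool" where
  "nonarch_local_field v \<longleftrightarrow> discrete_valuation v \<and> val_complete v \<and> finite_residue_field v"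

text \<open>Residue characteristic is odd iff 2 is not in the maximal ideal.\<close>
definition odd_residual_char :: "('a::field \<Rightarrow> int) \<Rightarrow> bool" where
  "odd_residual_char v \<longleftrightarrow> (2::'a) \<notin> val_ideal v"

definition field_automorphism :: "('a::field \<Rightarrow> 'a) \<Rightarrow> bool" where
  "field_automorphism r \<longleftrightarrow> bij r \<and> (\<forall>x y. r (x + y) = r x + r y) \<and>
     (\<forall>x y. r (x * y) = r x * r y) \<and> r 1 = 1"

definition finite_dim_space :: "('a::field \<Rightarrow> 'v::ab_group_add \<Rightarrow> 'v) \<Rightarrow> bool" where
  "finite_dim_space sc \<longleftrightarrow> vector_space sc \<and> (\<exists>B. finite B \<and> module.span sc B = UNIV)"

definition eps_hermitian ::
  "('a::field \<Rightarrow> 'a) \<Rightarrow> 'a \<Rightarrow> ('a \<Rightarrow> 'v::ab_group_add \<Rightarrow> 'v) \<Rightarrow> ('v \<Rightarrow> 'v \<Rightarrow> 'a) \<Rightarrow> bool" where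
  "eps_hermitian r eps sc h \<longleftrightarrow>
     (\<forall>v1 v2 w. h (v1 + v2) w = h v1 w + h v2 w) \<and>
     (\<forall>v w1 w2. h v (w1 + w2) = h v w1 + h v w2) \<and>
     (\<forall>v1 v2 x y. h (sc x v1) (sc y v2) = r x * eps * r (h v2 v1) * y) \<and>
     (\<forall>v. (\<forall>w. h v w = 0) \<longrightarrow> v = 0)"

definition o_span :: "('a::field \<Rightarrow> int) \<Rightarrow> ('a \<Rightarrow> 'v::ab_group_add \<Rightarrow> 'v) \<Rightarrow> 'v set \<Rightarrow> 'v set" where
  "o_span v sc S = {y. \<exists>c. (\<forall>b\<in>S. c b \<in> val_ring v) \<and> y = (\<Sum>b\<in>S. sc (c b) b)}"

definition o_lattice :: "('a::field \<Rightarrow> int) \<Rightarrow> ('a \<Rightarrow> 'v::ab_group_add \<Rightarrow> 'v) \<Rightarrow> 'v set \<Rightarrow> bool" where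
  "o_lattice v sc L \<longleftrightarrow> (\<exists>S. finite S \<and> module.span sc S = UNIV \<and> L = o_span v sc S)"

definition lattice_sequence ::
  "('a::field \<Rightarrow> int) \<Rightarrow> ('a \<Rightarrow> 'v::ab_group_add \<Rightarrow> 'v) \<Rightarrow> (int \<Rightarrow> 'v set) \<Rightarrow> bool" where
  "lattice_sequence v sc Lam \<longleftrightarrow>
     (\<forall>s. o_lattice v sc (Lam s)) \<and>
     (\<forall>s t. s > t \<longrightarrow> Lam s \<subseteq> Lam t) \<and>
     (\<exists>e::int. e \<ge> 1 \<and> (\<exists>p. p \<noteq> 0 \<and> v p = 1 \<and> (\<forall>s. sc p ` Lam s = Lam (s + e))))"

definition lattice_dual ::
  "('a::field \<Rightarrow> int) \<Rightarrow> ('v \<Rightarrow> 'v \<Rightarrow> 'a) \<Rightarrow> 'v set \<Rightarrow> 'v set" where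
  "lattice_dual v h M = {x. \<forall>m\<in>M. h x m \<in> val_ideal v}"

definition self_dual_lattice_sequence ::
  "('a::field \<Rightarrow> int) \<Rightarrow> ('a \<Rightarrow> 'v::ab_group_add \<Rightarrow> 'v) \<Rightarrow> ('v \<Rightarrow> 'v \<Rightarrow> 'a) \<Rightarrow> (int \<Rightarrow> 'v set) \<Rightarrow> bool" where
  "self_dual_lattice_sequence v sc h Lam \<longleftrightarrow>
     lattice_sequence v sc Lam \<and> (\<exists>u. \<forall>s. lattice_dual v h (Lam s) = Lam (u - s))"

definition a_n :: "('a::field \<Rightarrow> 'v::ab_group_add \<Rightarrow> 'v) \<Rightarrow> (int \<Rightarrow> 'v set) \<Rightarrow> int \<Rightarrow> ('v \<Rightarrow> 'v) set" where
  "a_n sc Lam n = {a. Vector_Spaces.linear sc sc a \<and> (\<forall>s. a ` Lam s \<subseteq> Lam (s + n))}"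

definition U_tilde :: "('a::field \<Rightarrow> 'v::ab_group_add \<Rightarrow> 'v) \<Rightarrow> (int \<Rightarrow> 'v set) \<Rightarrow> int \<Rightarrow> ('v \<Rightarrow> 'v) set" where
  "U_tilde sc Lam n = {(\<lambda>x. x + a x) | a. a \<in> a_n sc Lam n}"

definition sigma_adj :: "('v \<Rightarrow> 'v \<Rightarrow> 'a) \<Rightarrow> ('w \<Rightarrow> 'w \<Rightarrow> 'a) \<Rightarrow> ('v \<Rightarrow> 'w) \<Rightarrow> ('w \<Rightarrow> 'v)" where
  "sigma_adj h h' f = (THE g. \<forall>v w. h' (f v) w = h v (g w))"

definition isometry ::
  "('a::field \<Rightarrow> 'v::ab_group_add \<Rightarrow> 'v) \<Rightarrow> ('a \<Rightarrow> 'w::ab_group_add \<Rightarrow> 'w) \<Rightarrow>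
   ('v \<Rightarrow> 'v \<Rightarrow> 'a) \<Rightarrow> ('w \<Rightarrow> 'w \<Rightarrow> 'a) \<Rightarrow> ('v \<Rightarrow> 'w) \<Rightarrow> bool" where
  "isometry sc sc' h h' phi \<longleftrightarrow> Vector_Spaces.linear sc sc' phi \<and> bij phi \<and>
     (\<forall>x y. h' (phi x) (phi y) = h x y)"

end

theory Submission
  imports Defs "HOL-Computational_Algebra.Polynomial"
begin

text \<open>Let \<open>g = \<sigma>(f) f\<close>. It is self-adjoint for \<open>h\<close> because \<open>h'\<close> is \<open>\<epsilon>\<close>-hermitian,
  and it lies in \<open>U\<^sup>n(\<Lambda>)\<close> because the hypothesis writes it as \<open>u (f\<^sup>-\<^sup>1 u' f)\<close>.
  Since the residual characteristic is odd, \<open>g\<close> has an inverse square root \<open>k\<close> in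
  \<open>U\<^sup>n(\<Lambda>)\<close>: the \<open>\<Lambda>\<close>-adic limit of Newton's iteration \<open>k\<^sub>0 = 1\<close>,
  \<open>k\<^sub>j\<^sub>+\<^sub>1 = k\<^sub>j (1 - (g k\<^sub>j\<^sup>2 - 1) / 2)\<close>, whose defects \<open>g k\<^sub>j\<^sup>2 - 1\<close> raise
  the filtration by \<open>n (j + 1)\<close>. The limit exists because the lattices inherit completeness
  from \<open>F\<close>, and it is unique because self-duality forces \<open>\<Inter>\<^sub>s \<Lambda>\<^sub>s = 0\<close>. Every \<open>k\<^sub>j\<close> is a
  polynomial in \<open>g\<close>, hence self-adjoint, so in the limit \<open>h (k x) (g (k y)) = h x y\<close>.
  Then \<open>\<phi> = f k = 1 \<circ> f \<circ> k\<close> is an isometry: \<open>h' (f k x) (f k y) = h (k x) (g (k y)) = h x y\<close>.\<close>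

section \<open>Valuations\<close>

locale discretely_valued =
  fixes v :: "'a::field \<Rightarrow> int"
  assumes discrete_valuation: "discrete_valuation v"
begin

lemma val_mult: "x \<noteq> 0 \<Longrightarrow> y \<noteq> 0 \<Longrightarrow> v (x * y) = v x + v y"
  using discrete_valuation unfolding discrete_valuation_def by blast

lemma val_add_ge: "x \<noteq> 0 \<Longrightarrow> y \<noteq> 0 \<Longrightarrow> x + y \<noteq> 0 \<Longrightarrow> min (v x) (v y) \<le> v (x + y)"
  using discrete_valuation unfolding discrete_valuation_def by blast

lemma val_one [simp]: "v 1 = 0"
  using val_mult[of 1 1] by simp

lemma val_uminus [simp]: "v (- x) = v x"
proof (cases "x = 0")
  case False
  have "v (-1) = 0" using val_mult[of "-1" "-1"] by simp
  with False show ?thesis using val_mult[of "-1" x] by simp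
qed simp

lemma val_inverse: "x \<noteq> 0 \<Longrightarrow> v (inverse x) = - v x"
  using val_mult[of x "inverse x"] by simp

lemma val_power: "x \<noteq> 0 \<Longrightarrow> v (x ^ m) = int m * v x"
  by (induction m) (auto simp: val_mult algebra_simps)

lemma zero_mem_val_ge [simp]: "0 \<in> val_ge v k"
  by (simp add: val_ge_def)

lemma one_mem_val_ring [simp]: "1 \<in> val_ring v"
  by (simp add: val_ge_def)

lemma val_ge_add: "a \<in> val_ge v k \<Longrightarrow> b \<in> val_ge v k \<Longrightarrow> a + b \<in> val_ge v k"
  unfolding val_ge_def using val_add_ge[of a b] by fastforce

lemma val_ge_uminus: "a \<in> val_ge v k \<Longrightarrow> - a \<in> val_ge v k"
  by (simp add: val_ge_def)

lemma val_ge_diff: "a \<in> val_ge v k \<Longrightarrow> b \<in> val_ge v k \<Longrightarrow> a - b \<in> val_ge v k"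
  using val_ge_add[of a k "- b"] val_ge_uminus[of b k] by simp

lemma val_ge_mult: "a \<in> val_ge v k \<Longrightarrow> b \<in> val_ge v l \<Longrightarrow> a * b \<in> val_ge v (k + l)"
  unfolding val_ge_def by (cases "a = 0"; cases "b = 0") (auto simp: val_mult)

lemma val_ge_antimono: "k \<le> l \<Longrightarrow> val_ge v l \<subseteq> val_ge v k"
  unfolding val_ge_def by auto

lemma val_ge_sum: "(\<And>i. i \<in> I \<Longrightarrow> f i \<in> val_ge v k) \<Longrightarrow> sum f I \<in> val_ge v k"
  by (induction I rule: infinite_finite_induct) (auto intro: val_ge_add)

lemma mem_all_val_ge_eq_0: "(\<And>k. x \<in> val_ge v k) \<Longrightarrow> x = 0"
  using val_ge_def[of v "v x + 1"] by auto

lemma power_mem_val_ge: "v p = 1 \<Longrightarrow> p ^ m \<in> val_ge v (int m)"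
  by (cases "p = 0") (auto simp: val_ge_def val_power power_0_left)

lemma mult_inverse_power_mem_val_ring:
  assumes "p \<noteq> 0" "v p = 1" "a \<in> val_ge v (int m)"
  shows "a * inverse (p ^ m) \<in> val_ring v"
proof -
  have "inverse (p ^ m) \<in> val_ge v (- int m)"
    using assms by (simp add: val_ge_def val_inverse val_power)
  from val_ge_mult[OF assms(3) this] show ?thesis by simp
qed

lemma eventually_power_mult_mem_val_ring:
  assumes "p \<noteq> 0" "v p = 1"
  shows "eventually (\<lambda>m. p ^ m * c \<in> val_ring v) sequentially"
proof (cases "c = 0")
  case False
  have "p ^ m * c \<in> val_ring v" if "nat (- v c) \<le> m" for m
    using that assms False by (simp add: val_ge_def val_mult val_power)
  then show ?thesis unfolding eventually_sequentially by blast
qed simp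

lemma inverse_mem_val_ring: "x \<in> val_ring v \<Longrightarrow> x \<notin> val_ideal v \<Longrightarrow> inverse x \<in> val_ring v"
  by (auto simp: val_ge_def val_inverse)

lemma val_complete_limit:
  assumes "val_complete v" and cauchy: "\<And>m M. m \<le> M \<Longrightarrow> x M - x m \<in> val_ge v (int m)"
  shows "\<exists>L. \<forall>m. L - x m \<in> val_ge v (int m)"
proof -
  have "\<forall>k. \<exists>N. \<forall>m\<ge>N. \<forall>m'\<ge>N. x m - x m' \<in> val_ge v k"
  proof (intro allI exI[of _ "nat _"] impI)
    fix k m m' assume "nat k \<le> m" "nat k \<le> m'"
    then have "x m - x m' \<in> val_ge v (int (min m m'))"
      using cauchy[of m m'] cauchy[of m' m] val_ge_uminus[of "x m' - x m"]
      by (cases "m \<le> m'") (auto simp: min_def)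
    moreover have "k \<le> int (min m m')" using \<open>nat k \<le> m\<close> \<open>nat k \<le> m'\<close> by linarith
    ultimately show "x m - x m' \<in> val_ge v k" using val_ge_antimono by blast
  qed
  then obtain L where L: "\<forall>k. \<exists>N. \<forall>m\<ge>N. x m - L \<in> val_ge v k"
    using assms(1) unfolding val_complete_def by blast
  have "L - x m \<in> val_ge v (int m)" for m
  proof -
    obtain N where N: "\<forall>M\<ge>N. x M - L \<in> val_ge v (int m)" using L by blast
    define M where "M = max N m"
    have "x M - x m \<in> val_ge v (int m)" "x M - L \<in> val_ge v (int m)"
      using N cauchy[of m M] unfolding M_def by simp_all
    then have "(x M - x m) - (x M - L) \<in> val_ge v (int m)" by (rule val_ge_diff)
    then show ?thesis by simp
  qed
  then show ?thesis by blast
qed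

end

section \<open>Epsilon-hermitian spaces\<close>

context vector_space
begin

lemma ex_finite_basis:
  assumes "finite S" "span S = UNIV"
  obtains B where "finite B" "independent B" "span B = UNIV"
proof -
  obtain B where B: "B \<subseteq> S" "independent B" "S \<subseteq> span B"
    using maximal_independent_subset by blast
  have "span B = UNIV" using B(3) assms(2) span_minimal[OF _ subspace_span] by blast
  with B assms(1) show thesis using finite_subset that by blast
qed

lemma linear_inj_imp_surj_finite_span:
  assumes "finite S" "span S = UNIV" "Vector_Spaces.linear scale scale T" "inj T"
  shows "surj T"
proof -
  obtain B where "finite B" "independent B" "span B = UNIV"
    using ex_finite_basis assms(1,2) by blast
  then interpret finite_dimensional_vector_space scale B by unfold_locales
  show ?thesis using linear_inj_imp_surj assms(3,4) by blast
qed

end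

locale eps_hermitian_space = vector_space sc
  for sc :: "'a::field \<Rightarrow> 'v::ab_group_add \<Rightarrow> 'v" +
  fixes rho :: "'a \<Rightarrow> 'a" and eps :: 'a and h :: "'v \<Rightarrow> 'v \<Rightarrow> 'a"
  assumes rho_automorphism: "field_automorphism rho"
    and eps: "eps = 1 \<or> eps = -1"
    and hermitian: "eps_hermitian rho eps sc h"
begin

lemma rho_add: "rho (x + y) = rho x + rho y"
  and rho_mult: "rho (x * y) = rho x * rho y"
  and rho_one [simp]: "rho 1 = 1"
  using rho_automorphism unfolding field_automorphism_def by auto

lemma rho_zero [simp]: "rho 0 = 0"
  using rho_add[of 0 0] by (metis add.right_neutral add_left_cancel)

lemma rho_inverse: "rho (inverse x) = inverse (rho x)"
proof (cases "x = 0")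
  case False
  then have "rho x * rho (inverse x) = 1" by (simp flip: rho_mult)
  then show ?thesis by (simp add: inverse_unique)
qed simp

lemma h_add_left: "h (x + y) z = h x z + h y z"
  and h_add_right: "h x (y + z) = h x y + h x z"
  and h_scale_scale: "h (sc a x) (sc b y) = rho a * eps * rho (h y x) * b"
  and h_nondegenerate_left: "(\<And>w. h x w = 0) \<Longrightarrow> x = 0"
  using hermitian unfolding eps_hermitian_def by blast+

lemma h_eps_sym: "h x y = eps * rho (h y x)"
  using h_scale_scale[of 1 x 1 y] by simp

lemma h_scale_left [simp]: "h (sc a x) y = rho a * h x y"
  using h_scale_scale[of a x 1 y] h_eps_sym[of x y] by simp

lemma h_scale_right [simp]: "h x (sc b y) = h x y * b"
  using h_scale_scale[of 1 x b y] h_eps_sym[of x y] by simp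

lemma h_zero_left [simp]: "h 0 y = 0"
  using h_scale_left[of 0 0 y] by simp

lemma h_diff_left: "h (x - y) z = h x z - h y z"
  using h_add_left[of "x - y" y z] by simp

lemma h_diff_right: "h x (y - z) = h x y - h x z"
  using h_add_right[of x "y - z" z] by simp

lemma h_sum_left: "h (\<Sum>i\<in>I. f i) y = (\<Sum>i\<in>I. h (f i) y)"
  by (induction I rule: infinite_finite_induct) (auto simp: h_add_left)

lemma h_nondegenerate_right: "(\<And>x. h x y = 0) \<Longrightarrow> y = 0"
  using h_nondegenerate_left[of y] h_eps_sym[of y] by simp

sublocale endo: vector_space_pair sc sc ..

definition selfadjoint :: "('v \<Rightarrow> 'v) \<Rightarrow> bool" where
  "selfadjoint \<phi> \<longleftrightarrow> (\<forall>x y. h (\<phi> x) y = h x (\<phi> y))"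

lemma semilinear_functional_represented:
  assumes "finite S" "span S = UNIV"
    and l_add: "\<And>x y. l (x + y) = l x + l y" and l_scale: "\<And>a x. l (sc a x) = rho a * l x"
  shows "\<exists>y. \<forall>x. l x = h x y"
proof -
  obtain B where B: "finite B" "independent B" "span B = UNIV"
    using ex_finite_basis assms(1,2) by blast
  have coords: "\<exists>r. x = (\<Sum>b\<in>B. sc (r b) b)" for x
    using span_finite[OF B(1)] B(3) by auto
  have coords_unique: "(\<Sum>b\<in>B. sc (c b) b) = 0 \<Longrightarrow> b \<in> B \<Longrightarrow> c b = 0" for c b
    using B(2) dependent_finite[OF B(1)] by blast
  have l_sum: "l (\<Sum>i\<in>I. F i) = (\<Sum>i\<in>I. l (F i))" for I F
    by (induction I rule: infinite_finite_induct) (auto simp: l_add l_scale[of 0 0, simplified])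
  have determined_by_basis: "l x = h x y" if "\<forall>b\<in>B. l b = h b y" for x y
  proof -
    obtain r where r: "x = (\<Sum>b\<in>B. sc (r b) b)" using coords by blast
    show ?thesis using that unfolding r l_sum h_sum_left by (simp add: l_scale)
  qed
  define T where "T y = (\<Sum>b\<in>B. sc (h b y) b)" for y
  have T_diff: "T y - T z = (\<Sum>b\<in>B. sc (h b y - h b z) b)" for y z
    unfolding T_def by (simp add: scale_left_diff_distrib sum_subtractf)
  have "Vector_Spaces.linear sc sc T"
    unfolding Vector_Spaces.linear_iff T_def
    by (auto simp: h_add_right scale_left_distrib sum.distrib scale_sum_right mult.commute
        vector_space_axioms)
  moreover have "inj T"
  proof (rule injI)
    fix y z assume "T y = T z"
    then have "\<forall>b\<in>B. h b (y - z) = 0"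
      using coords_unique[of "\<lambda>b. h b y - h b z"] T_diff[of y z] by (simp add: h_diff_right)
    then have "h x (y - z) = 0" for x
      using coords[of x] by (auto simp: h_sum_left)
    then show "y = z" using h_nondegenerate_right[of "y - z"] by simp
  qed
  ultimately obtain y where y: "T y = (\<Sum>b\<in>B. sc (l b) b)"
    using linear_inj_imp_surj_finite_span[OF assms(1,2)] by (metis surjD)
  have "\<forall>b\<in>B. l b = h b y"
    using coords_unique[of "\<lambda>b. h b y - l b"] T_diff[of y] y
    by (simp add: T_def scale_left_diff_distrib sum_subtractf)
  then show ?thesis using determined_by_basis by blast
qed

lemma eps_hermitian_space_other:
  "vector_space sc' \<Longrightarrow> eps_hermitian rho eps sc' h' \<Longrightarrow> eps_hermitian_space sc' rho eps h'"
  using eps rho_automorphism by (simp add: eps_hermitian_space_def eps_hermitian_space_axioms_def)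

lemma sigma_adj_adjoint:
  assumes "finite S" "span S = UNIV"
    and f: "Vector_Spaces.linear sc sc' f" and h': "eps_hermitian rho eps sc' h'"
  shows "h' (f x) w = h x (sigma_adj h h' f w)"
proof -
  interpret W: eps_hermitian_space sc' rho eps h'
    by (rule eps_hermitian_space_other[OF _ h']) (use f in \<open>simp add: Vector_Spaces.linear_iff\<close>)
  have "\<exists>y. \<forall>x. h' (f x) w = h x y" for w
    using f by (intro semilinear_functional_represented[OF assms(1,2)])
      (simp_all add: Vector_Spaces.linear_iff W.h_add_left)
  then obtain G where G: "\<forall>x w. h' (f x) w = h x (G w)" by metis
  have "sigma_adj h h' f = G"
    unfolding sigma_adj_def
  proof (rule the_equality)
    fix G' assume G': "\<forall>x w. h' (f x) w = h x (G' w)"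
    show "G' = G"
    proof
      fix w
      have "h x (G' w - G w) = 0" for x using G G' by (simp add: h_diff_right)
      then show "G' w = G w" using h_nondegenerate_right[of "G' w - G w"] by simp
    qed
  qed (rule G)
  with G show ?thesis by simp
qed

lemma sigma_adj_comp_selfadjoint:
  assumes "finite S" "span S = UNIV"
    and f: "Vector_Spaces.linear sc sc' f" and h': "eps_hermitian rho eps sc' h'"
  shows "selfadjoint (sigma_adj h h' f \<circ> f)"
proof -
  interpret W: eps_hermitian_space sc' rho eps h'
    by (rule eps_hermitian_space_other[OF _ h']) (use f in \<open>simp add: Vector_Spaces.linear_iff\<close>)
  note adj = sigma_adj_adjoint[OF assms]
  have "h (sigma_adj h h' f (f x)) y = h x (sigma_adj h h' f (f y))" for x y
  proof -
    have "h (sigma_adj h h' f (f x)) y = eps * rho (h y (sigma_adj h h' f (f x)))"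
      by (rule h_eps_sym)
    also have "h y (sigma_adj h h' f (f x)) = h' (f y) (f x)"
      by (rule adj[symmetric])
    also have "eps * rho (h' (f y) (f x)) = h' (f x) (f y)"
      by (rule W.h_eps_sym[symmetric])
    also have "\<dots> = h x (sigma_adj h h' f (f y))"
      by (rule adj)
    finally show ?thesis .
  qed
  then show ?thesis unfolding selfadjoint_def by simp
qed

lemma isometry_comp_normalizing:
  assumes S: "finite S" "span S = UNIV"
    and f: "Vector_Spaces.linear sc sc' f" "bij f" and h': "eps_hermitian rho eps sc' h'"
    and k: "Vector_Spaces.linear sc sc k"
    and normalizes: "\<And>x y. h (k x) (sigma_adj h h' f (f (k y))) = h x y"
  shows "isometry sc sc' h h' (f \<circ> k)"
proof -
  have "inj k"
  proof (rule injI)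
    fix x y assume "k x = k y"
    then have "k (x - y) = 0" using k by (simp add: endo.linear_diff)
    then have "h (x - y) z = 0" for z using normalizes[of "x - y"] by simp
    then show "x = y" using h_nondegenerate_left[of "x - y"] by simp
  qed
  with linear_inj_imp_surj_finite_span[OF S k] have "bij k" by (simp add: bij_def)
  moreover have "h' (f (k x)) (f (k y)) = h x y" for x y
    using sigma_adj_adjoint[OF S f(1) h'] normalizes by simp
  ultimately show ?thesis
    unfolding isometry_def using Vector_Spaces.linear_compose[OF k f(1)] bij_comp[of k f] f(2)
    by simp
qed

end

section \<open>Self-dual lattice sequences\<close>

locale self_dual_lattice_space =
  discretely_valued v + eps_hermitian_space sc rho eps h
  for v :: "'a::field \<Rightarrow> int" and sc :: "'a \<Rightarrow> 'v::ab_group_add \<Rightarrow> 'v"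
    and rho :: "'a \<Rightarrow> 'a" and eps :: 'a and h :: "'v \<Rightarrow> 'v \<Rightarrow> 'a" +
  fixes Lam :: "int \<Rightarrow> 'v set" and p :: 'a and e :: int and u :: int and S0 :: "'v set"
  assumes val_complete: "val_complete v"
    and val_rho: "\<And>x. x \<noteq> 0 \<Longrightarrow> v (rho x) = v x"
    and lattices: "\<And>s. o_lattice v sc (Lam s)"
    and decreasing: "\<And>s t. t < s \<Longrightarrow> Lam s \<subseteq> Lam t"
    and period: "e \<ge> 1"
    and uniformizer: "p \<noteq> 0" "v p = 1"
    and shift: "\<And>s. sc p ` Lam s = Lam (s + e)"
    and self_dual: "\<And>s. lattice_dual v h (Lam s) = Lam (u - s)"
    and coordinates: "finite S0" "span S0 = UNIV" "Lam 0 = o_span v sc S0"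

lemma self_dual_lattice_spaceI:
  assumes "vector_space sc" "field_automorphism rho" "eps = 1 \<or> eps = -1"
    and "eps_hermitian rho eps sc h" "nonarch_local_field v"
    and "\<forall>x. x \<noteq> 0 \<longrightarrow> v (rho x) = v x" "self_dual_lattice_sequence v sc h Lam"
  obtains p e u S0 where "self_dual_lattice_space v sc rho eps h Lam p e u S0"
proof -
  have seq: "lattice_sequence v sc Lam" and "\<exists>u. \<forall>s. lattice_dual v h (Lam s) = Lam (u - s)"
    using assms(7) unfolding self_dual_lattice_sequence_def by auto
  then obtain u where u: "\<forall>s. lattice_dual v h (Lam s) = Lam (u - s)" by blast
  have lat: "\<forall>s. o_lattice v sc (Lam s)" and dec: "\<forall>s t. s > t \<longrightarrow> Lam s \<subseteq> Lam t"
    and "\<exists>e::int. e \<ge> 1 \<and> (\<exists>p. p \<noteq> 0 \<and> v p = 1 \<and> (\<forall>s. sc p ` Lam s = Lam (s + e)))"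
    using seq unfolding lattice_sequence_def by auto
  then obtain e p where ep: "e \<ge> 1" "p \<noteq> 0" "v p = 1" "\<forall>s. sc p ` Lam s = Lam (s + e)"
    by blast
  obtain S0 where S0: "finite S0" "module.span sc S0 = UNIV" "Lam 0 = o_span v sc S0"
    using lat[rule_format, of 0] unfolding o_lattice_def by blast
  have "discrete_valuation v" "val_complete v"
    using assms(5) unfolding nonarch_local_field_def by auto
  with assms(1-4,6) lat dec ep u S0
  have "self_dual_lattice_space v sc rho eps h Lam p e u S0"
    unfolding self_dual_lattice_space_def self_dual_lattice_space_axioms_def discretely_valued_def
      eps_hermitian_space_def eps_hermitian_space_axioms_def
    by blast
  then show thesis by (rule that)
qed

context self_dual_lattice_space
begin

lemma rho_mem_val_ge: "x \<in> val_ge v k \<Longrightarrow> rho x \<in> val_ge v k"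
  using val_rho[of x] by (cases "x = 0") (auto simp: val_ge_def)

lemma eps_mem_val_ring: "eps \<in> val_ring v"
  using eps val_ge_uminus[OF one_mem_val_ring] by auto

lemma o_span_add: "x \<in> o_span v sc S \<Longrightarrow> y \<in> o_span v sc S \<Longrightarrow> x + y \<in> o_span v sc S"
proof -
  assume "x \<in> o_span v sc S" "y \<in> o_span v sc S"
  then obtain c d where "\<forall>b\<in>S. c b \<in> val_ring v" "x = (\<Sum>b\<in>S. sc (c b) b)"
    "\<forall>b\<in>S. d b \<in> val_ring v" "y = (\<Sum>b\<in>S. sc (d b) b)"
    unfolding o_span_def by blast
  then show ?thesis unfolding o_span_def
    by (auto intro!: exI[of _ "\<lambda>b. c b + d b"] val_ge_add
        simp: scale_left_distrib sum.distrib)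
qed

lemma o_span_scale: "a \<in> val_ring v \<Longrightarrow> x \<in> o_span v sc S \<Longrightarrow> sc a x \<in> o_span v sc S"
proof -
  assume "a \<in> val_ring v" "x \<in> o_span v sc S"
  then obtain c where "\<forall>b\<in>S. c b \<in> val_ring v" "x = (\<Sum>b\<in>S. sc (c b) b)"
    unfolding o_span_def by blast
  then show ?thesis unfolding o_span_def
    using val_ge_mult[OF \<open>a \<in> val_ring v\<close>, of "c _" 0]
    by (auto intro!: exI[of _ "\<lambda>b. a * c b"] simp: scale_sum_right)
qed

lemma lattice_o_span: "\<exists>S. Lam s = o_span v sc S"
  using lattices unfolding o_lattice_def by blast

lemma lattice_add: "x \<in> Lam s \<Longrightarrow> y \<in> Lam s \<Longrightarrow> x + y \<in> Lam s"
  using lattice_o_span[of s] o_span_add by metis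

lemma lattice_scale: "a \<in> val_ring v \<Longrightarrow> x \<in> Lam s \<Longrightarrow> sc a x \<in> Lam s"
  using lattice_o_span[of s] o_span_scale by metis

lemma zero_mem_o_span: "0 \<in> o_span v sc S"
  unfolding o_span_def by (auto intro!: exI[of _ "\<lambda>_. 0"])

lemma lattice_zero [simp]: "0 \<in> Lam s"
  using lattice_o_span[of s] zero_mem_o_span by metis

lemma lattice_uminus: "x \<in> Lam s \<Longrightarrow> - x \<in> Lam s"
  using lattice_scale[OF val_ge_uminus[OF one_mem_val_ring]] by simp

lemma lattice_diff: "x \<in> Lam s \<Longrightarrow> y \<in> Lam s \<Longrightarrow> x - y \<in> Lam s"
  using lattice_add[of x s "- y"] lattice_uminus by simp

lemma lattice_antimono: "s \<le> t \<Longrightarrow> Lam t \<subseteq> Lam s"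
  using decreasing by (cases "s = t") auto

lemma lattice_shift_power: "sc (p ^ m) ` Lam s = Lam (s + int m * e)"
proof (induction m)
  case (Suc m)
  have "sc (p ^ Suc m) ` Lam s = sc p ` sc (p ^ m) ` Lam s"
    by (auto simp: image_image mult.commute)
  then show ?case using Suc shift by (simp add: algebra_simps)
qed simp

lemma lattice_multiple_iff_coords:
  "x \<in> Lam (int m * e) \<longleftrightarrow>
     (\<exists>c. (\<forall>b\<in>S0. c b \<in> val_ge v (int m)) \<and> x = (\<Sum>b\<in>S0. sc (c b) b))"
proof
  assume "x \<in> Lam (int m * e)"
  then obtain w where "x = sc (p ^ m) w" "w \<in> o_span v sc S0"
    using lattice_shift_power[of m 0] coordinates(3) by auto
  then obtain c where "x = sc (p ^ m) w" "\<forall>b\<in>S0. c b \<in> val_ring v" "w = (\<Sum>b\<in>S0. sc (c b) b)"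
    unfolding o_span_def by blast
  then show "\<exists>c. (\<forall>b\<in>S0. c b \<in> val_ge v (int m)) \<and> x = (\<Sum>b\<in>S0. sc (c b) b)"
    using val_ge_mult[OF power_mem_val_ge[OF uniformizer(2)], of "c _" 0 m]
    by (intro exI[of _ "\<lambda>b. p ^ m * c b"]) (auto simp: scale_sum_right)
next
  assume "\<exists>c. (\<forall>b\<in>S0. c b \<in> val_ge v (int m)) \<and> x = (\<Sum>b\<in>S0. sc (c b) b)"
  then obtain c where c: "\<forall>b\<in>S0. c b \<in> val_ge v (int m)" "x = (\<Sum>b\<in>S0. sc (c b) b)"
    by blast
  define w where "w = (\<Sum>b\<in>S0. sc (c b * inverse (p ^ m)) b)"
  have "w \<in> Lam 0"
    using c(1) mult_inverse_power_mem_val_ring[OF uniformizer] coordinates(3)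
    unfolding w_def o_span_def by (auto intro!: exI[of _ "\<lambda>b. c b * inverse (p ^ m)"])
  moreover have "x = sc (p ^ m) w"
    unfolding c(2) w_def scale_sum_right scale_scale using uniformizer(1)
    by (intro sum.cong) (simp_all add: field_simps)
  ultimately show "x \<in> Lam (int m * e)" using lattice_shift_power[of m 0] by auto
qed

lemma lattice_exhaustive: "\<exists>s. x \<in> Lam s"
proof -
  obtain c where x: "x = (\<Sum>b\<in>S0. sc (c b) b)"
    using span_finite[OF coordinates(1)] coordinates(2) by auto
  have "eventually (\<lambda>m. \<forall>b\<in>S0. p ^ m * c b \<in> val_ring v) sequentially"
    using coordinates(1) eventually_power_mult_mem_val_ring[OF uniformizer]
    by (simp add: eventually_ball_finite)
  then obtain m where m: "\<forall>b\<in>S0. p ^ m * c b \<in> val_ring v"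
    using eventually_sequentially by auto
  have "sc (p ^ m) x \<in> Lam (- int m * e + int m * e)"
    using m coordinates(3) by (auto simp: x o_span_def scale_sum_right)
  then have "sc (p ^ m) x \<in> sc (p ^ m) ` Lam (- int m * e)"
    using lattice_shift_power[of m "- int m * e"] by simp
  then show ?thesis using uniformizer(1) by auto
qed

lemma lattice_common: obtains s where "x \<in> Lam s" "y \<in> Lam s"
proof -
  obtain s1 s2 where "x \<in> Lam s1" "y \<in> Lam s2" using lattice_exhaustive by meson
  then have "x \<in> Lam (min s1 s2)" "y \<in> Lam (min s1 s2)"
    using lattice_antimono[of "min s1 s2" s1] lattice_antimono[of "min s1 s2" s2] by auto
  then show thesis by (rule that)
qed

lemma lattice_scale_shift: "\<exists>m::nat. \<forall>s. sc c ` Lam (s + int m * e) \<subseteq> Lam s"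
proof -
  from eventually_power_mult_mem_val_ring[OF uniformizer, of c]
  obtain m where m: "p ^ m * c \<in> val_ring v" unfolding eventually_sequentially by blast
  have "sc c z \<in> Lam s" if z: "z \<in> Lam (s + int m * e)" for z s
  proof -
    obtain y where "y \<in> Lam s" "z = sc (p ^ m) y"
      using z lattice_shift_power[of m s] by (metis imageE)
    then show ?thesis using lattice_scale[OF m] by (simp add: mult.commute)
  qed
  then show ?thesis by blast
qed

lemma h_lattice_mem_val_ge:
  assumes "a \<in> Lam s" "b \<in> Lam t" "u - s + int m * e \<le> t"
  shows "h b a \<in> val_ge v (int m + 1)" "h a b \<in> val_ge v (int m + 1)"
proof -
  have "b \<in> sc (p ^ m) ` Lam (u - s)"
    using assms(2,3) lattice_antimono lattice_shift_power by blast
  then obtain b' where b': "b' \<in> Lam (u - s)" "b = sc (p ^ m) b'" by blast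
  have "h b' a \<in> val_ideal v"
    using b'(1) assms(1) self_dual[of s] unfolding lattice_dual_def by blast
  then have "rho (p ^ m) * h b' a \<in> val_ge v (int m + 1)"
    using val_ge_mult rho_mem_val_ge[OF power_mem_val_ge[OF uniformizer(2)]] by blast
  then show ba: "h b a \<in> val_ge v (int m + 1)" using b' by simp
  have "eps * rho (h b a) \<in> val_ge v (0 + (int m + 1))"
    using val_ge_mult[OF eps_mem_val_ring rho_mem_val_ge[OF ba]] .
  then show "h a b \<in> val_ge v (int m + 1)" using h_eps_sym[of a b] by simp
qed

lemma lattice_Inter_eq_0:
  assumes "\<And>s. x \<in> Lam s"
  shows "x = 0"
proof (rule h_nondegenerate_right)
  fix y
  obtain t where t: "y \<in> Lam t" using lattice_exhaustive by blast
  have "h y x \<in> val_ge v (int (nat k) + 1)" for k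
    by (rule h_lattice_mem_val_ge(2)[OF t assms order_refl])
  moreover have "val_ge v (int (nat k) + 1) \<subseteq> val_ge v k" for k
    by (rule val_ge_antimono) simp
  ultimately have "h y x \<in> val_ge v k" for k by blast
  then show "h y x = 0" by (rule mem_all_val_ge_eq_0)
qed

end

section \<open>Limits for the lattice topology\<close>

context self_dual_lattice_space
begin

definition lattice_limit :: "(nat \<Rightarrow> 'v) \<Rightarrow> 'v \<Rightarrow> bool" where
  "lattice_limit y L \<longleftrightarrow> (\<forall>s. eventually (\<lambda>j. L - y j \<in> Lam s) sequentially)"

lemma lattice_limit_unique:
  assumes "lattice_limit y L1" "lattice_limit y L2"
  shows "L1 = L2"
proof -
  have "L1 - L2 \<in> Lam s" for s
  proof -
    have "eventually (\<lambda>j. L1 - y j \<in> Lam s \<and> L2 - y j \<in> Lam s) sequentially"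
      using assms unfolding lattice_limit_def by (intro eventually_conj) auto
    then obtain j where "L1 - y j \<in> Lam s" "L2 - y j \<in> Lam s"
      unfolding eventually_sequentially by blast
    then have "(L1 - y j) - (L2 - y j) \<in> Lam s" by (rule lattice_diff)
    then show ?thesis by simp
  qed
  then show ?thesis using lattice_Inter_eq_0[of "L1 - L2"] by simp
qed

lemma lattice_limit_add:
  assumes "lattice_limit y L" "lattice_limit z M"
  shows "lattice_limit (\<lambda>j. y j + z j) (L + M)"
  unfolding lattice_limit_def
proof
  fix s
  have "eventually (\<lambda>j. L - y j \<in> Lam s \<and> M - z j \<in> Lam s) sequentially"
    using assms unfolding lattice_limit_def by (intro eventually_conj) auto
  then show "eventually (\<lambda>j. L + M - (y j + z j) \<in> Lam s) sequentially"
  proof (rule eventually_mono)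
    fix j assume "L - y j \<in> Lam s \<and> M - z j \<in> Lam s"
    then have "(L - y j) + (M - z j) \<in> Lam s" using lattice_add by blast
    then show "L + M - (y j + z j) \<in> Lam s" by (simp add: add_diff_add)
  qed
qed

lemma lattice_limit_scale:
  assumes "lattice_limit y L"
  shows "lattice_limit (\<lambda>j. sc c (y j)) (sc c L)"
  unfolding lattice_limit_def
proof
  fix s
  from lattice_scale_shift[of c]
  obtain m where m: "sc c ` Lam (s + int m * e) \<subseteq> Lam s" by blast
  have "eventually (\<lambda>j. L - y j \<in> Lam (s + int m * e)) sequentially"
    using assms unfolding lattice_limit_def by (rule spec)
  then show "eventually (\<lambda>j. sc c L - sc c (y j) \<in> Lam s) sequentially"
  proof (rule eventually_mono)
    fix j assume "L - y j \<in> Lam (s + int m * e)"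
    then have "sc c (L - y j) \<in> Lam s" using m by auto
    then show "sc c L - sc c (y j) \<in> Lam s" by (simp add: scale_right_diff_distrib)
  qed
qed

lemma lattice_telescope:
  assumes "\<And>j. N \<le> j \<Longrightarrow> y (Suc j) - y j \<in> Lam s" "N \<le> j" "j \<le> i"
  shows "y i - y j \<in> Lam s"
  using assms(3)
proof (induction i rule: dec_induct)
  case (step i)
  have "(y (Suc i) - y i) + (y i - y j) \<in> Lam s"
    using step assms(1,2) by (intro lattice_add) auto
  then show ?case by simp
qed simp

lemma lattice_series_limit:
  assumes steps: "\<And>m. z (Suc m) - z m \<in> Lam (int m * e)"
  shows "\<exists>Y. \<forall>m. Y - z m \<in> Lam (int m * e)"
proof -
  have "\<forall>m. \<exists>c. (\<forall>b\<in>S0. c b \<in> val_ge v (int m)) \<and> z (Suc m) - z m = (\<Sum>b\<in>S0. sc (c b) b)"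
    using steps unfolding lattice_multiple_iff_coords by blast
  from choice[OF this] obtain d where d: "\<And>m b. b \<in> S0 \<Longrightarrow> d m b \<in> val_ge v (int m)"
    and d_step: "\<And>m. z (Suc m) - z m = (\<Sum>b\<in>S0. sc (d m b) b)"
    by blast
  define P where "P m b = (\<Sum>i<m. d i b)" for m b
  have z_coords: "z m = z 0 + (\<Sum>b\<in>S0. sc (P m b) b)" for m
  proof (induction m)
    case (Suc m)
    have "z (Suc m) = z m + (z (Suc m) - z m)" by simp
    also have "\<dots> = z 0 + (\<Sum>b\<in>S0. sc (P m b) b) + (\<Sum>b\<in>S0. sc (d m b) b)"
      unfolding d_step[symmetric] Suc[symmetric] by simp
    also have "\<dots> = z 0 + (\<Sum>b\<in>S0. sc (P (Suc m) b) b)"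
      unfolding P_def by (simp add: scale_left_distrib sum.distrib)
    finally show ?case .
  qed (simp add: P_def)
  have P_cauchy: "P M b - P m b \<in> val_ge v (int m)" if "b \<in> S0" "m \<le> M" for b m M
  proof -
    have "P M b - P m b = (\<Sum>i\<in>{m..<M}. d i b)"
      unfolding P_def lessThan_atLeast0 using that(2) by (simp add: sum_diff_nat_ivl)
    also have "\<dots> \<in> val_ge v (int m)"
    proof (rule val_ge_sum)
      fix i assume "i \<in> {m..<M}"
      then show "d i b \<in> val_ge v (int m)"
        using d[OF that(1), of i] val_ge_antimono[of "int m" "int i"] by auto
    qed
    finally show ?thesis .
  qed
  have "\<forall>b\<in>S0. \<exists>L. \<forall>m. L - P m b \<in> val_ge v (int m)"
  proof
    fix b assume "b \<in> S0"
    then show "\<exists>L. \<forall>m. L - P m b \<in> val_ge v (int m)"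
      using P_cauchy by (intro val_complete_limit[OF val_complete])
  qed
  from bchoice[OF this] obtain L where L: "\<And>b m. b \<in> S0 \<Longrightarrow> L b - P m b \<in> val_ge v (int m)"
    by blast
  define Y where "Y = z 0 + (\<Sum>b\<in>S0. sc (L b) b)"
  have "Y - z m = (\<Sum>b\<in>S0. sc (L b - P m b) b)" for m
    unfolding Y_def z_coords[of m] by (simp add: scale_left_diff_distrib sum_subtractf)
  then have "Y - z m \<in> Lam (int m * e)" for m
    using L by (subst lattice_multiple_iff_coords) (auto intro!: exI[of _ "\<lambda>b. L b - P m b"])
  then show ?thesis by blast
qed

lemma lattice_cauchy_limit:
  assumes cauchy: "\<And>s. eventually (\<lambda>j. y (Suc j) - y j \<in> Lam s) sequentially"
  shows "\<exists>L. lattice_limit y L"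
proof -
  have "\<forall>m. \<exists>N. \<forall>j\<ge>N. \<forall>i\<ge>j. y i - y j \<in> Lam (int m * e)"
  proof
    fix m
    obtain N where "\<And>j. N \<le> j \<Longrightarrow> y (Suc j) - y j \<in> Lam (int m * e)"
      using cauchy[of "int m * e"] unfolding eventually_sequentially by blast
    then show "\<exists>N. \<forall>j\<ge>N. \<forall>i\<ge>j. y i - y j \<in> Lam (int m * e)"
      using lattice_telescope by blast
  qed
  from choice[OF this]
  obtain N where N: "\<And>m j i. N m \<le> j \<Longrightarrow> j \<le> i \<Longrightarrow> y i - y j \<in> Lam (int m * e)"
    by blast
  define Na where "Na m = (\<Sum>i\<le>m. N i)" for m
  have Na_ge: "N m \<le> Na m" for m
    unfolding Na_def by (rule member_le_sum) auto
  have Na_mono: "Na m \<le> Na (Suc m)" for m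
    unfolding Na_def by simp
  have "y (Na (Suc m)) - y (Na m) \<in> Lam (int m * e)" for m
    using N Na_ge Na_mono by blast
  then obtain Y where Y: "\<And>m. Y - y (Na m) \<in> Lam (int m * e)"
    using lattice_series_limit[of "\<lambda>m. y (Na m)"] by blast
  have "lattice_limit y Y"
    unfolding lattice_limit_def eventually_sequentially
  proof (intro allI exI[of _ "Na (nat _)"] impI)
    fix s j assume j: "Na (nat s) \<le> j"
    define m where "m = nat s"
    have "y j - y (Na m) \<in> Lam (int m * e)"
      using N[of m] Na_ge j unfolding m_def by blast
    with Y have "(Y - y (Na m)) - (y j - y (Na m)) \<in> Lam (int m * e)"
      by (rule lattice_diff)
    moreover have "s \<le> int m * e"
      using mult_left_mono[OF period, of "int m"] unfolding m_def by linarith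
    ultimately show "Y - y j \<in> Lam s" using lattice_antimono by auto
  qed
  then show ?thesis by blast
qed

end

section \<open>The groups U_tilde\<close>

context self_dual_lattice_space
begin

definition raises :: "int \<Rightarrow> ('v \<Rightarrow> 'v) \<Rightarrow> bool" where
  "raises m \<phi> \<longleftrightarrow> (\<forall>s. \<phi> ` Lam s \<subseteq> Lam (s + m))"

lemma raisesD: "raises m \<phi> \<Longrightarrow> x \<in> Lam s \<Longrightarrow> \<phi> x \<in> Lam (s + m)"
  unfolding raises_def by blast

lemma raisesI: "(\<And>s x. x \<in> Lam s \<Longrightarrow> \<phi> x \<in> Lam (s + m)) \<Longrightarrow> raises m \<phi>"
  unfolding raises_def by blast

lemma raises_comp:
  assumes "raises a \<phi>" "raises b \<psi>"
  shows "raises (a + b) (\<lambda>x. \<phi> (\<psi> x))"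
proof (rule raisesI)
  fix s x assume "x \<in> Lam s"
  then have "\<phi> (\<psi> x) \<in> Lam (s + b + a)" using assms by (blast intro: raisesD)
  then show "\<phi> (\<psi> x) \<in> Lam (s + (a + b))" by (simp add: ac_simps)
qed

lemma raises_add: "raises a \<phi> \<Longrightarrow> raises a \<psi> \<Longrightarrow> raises a (\<lambda>x. \<phi> x + \<psi> x)"
  by (rule raisesI) (simp add: raisesD lattice_add)

lemma raises_diff: "raises a \<phi> \<Longrightarrow> raises a \<psi> \<Longrightarrow> raises a (\<lambda>x. \<phi> x - \<psi> x)"
  by (rule raisesI) (simp add: raisesD lattice_diff)

lemma raises_scale: "c \<in> val_ring v \<Longrightarrow> raises a \<phi> \<Longrightarrow> raises a (\<lambda>x. sc c (\<phi> x))"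
  by (rule raisesI) (simp add: raisesD lattice_scale)

lemma raises_antimono:
  assumes "b \<le> a" "raises a \<phi>"
  shows "raises b \<phi>"
proof (rule raisesI)
  fix s x assume "x \<in> Lam s"
  with assms(2) have "\<phi> x \<in> Lam (s + a)" by (rule raisesD)
  then show "\<phi> x \<in> Lam (s + b)" using lattice_antimono[of "s + b" "s + a"] assms(1) by auto
qed

lemma raises_ident: "raises 0 (\<lambda>x. x)"
  by (rule raisesI) simp

lemma raises_ident_plus:
  assumes "0 \<le> a" "raises a (\<lambda>x. \<phi> x - x)"
  shows "raises 0 \<phi>"
proof -
  have "raises 0 (\<lambda>x. \<phi> x - x)" using raises_antimono assms by blast
  from raises_add[OF this raises_ident] show ?thesis by simp
qed

lemma U_tilde_iff:
  "w \<in> U_tilde sc Lam n \<longleftrightarrow>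
     Vector_Spaces.linear sc sc (\<lambda>x. w x - x) \<and> raises n (\<lambda>x. w x - x)"
proof
  assume "w \<in> U_tilde sc Lam n"
  then obtain a where "w = (\<lambda>x. x + a x)" "a \<in> a_n sc Lam n"
    unfolding U_tilde_def by blast
  then show "Vector_Spaces.linear sc sc (\<lambda>x. w x - x) \<and> raises n (\<lambda>x. w x - x)"
    unfolding a_n_def raises_def by simp
next
  assume "Vector_Spaces.linear sc sc (\<lambda>x. w x - x) \<and> raises n (\<lambda>x. w x - x)"
  then have "(\<lambda>x. w x - x) \<in> a_n sc Lam n" "w = (\<lambda>x. x + (w x - x))"
    unfolding a_n_def raises_def by auto
  then show "w \<in> U_tilde sc Lam n"
    unfolding U_tilde_def by (intro CollectI exI[of _ "\<lambda>x. w x - x"]) simp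
qed

lemma linear_of_U_tilde: "w \<in> U_tilde sc Lam n \<Longrightarrow> Vector_Spaces.linear sc sc w"
  using endo.linear_compose_add[OF _ linear_ident, of "\<lambda>x. w x - x"] by (simp add: U_tilde_iff)

lemma U_tilde_comp:
  assumes "0 \<le> n" "w1 \<in> U_tilde sc Lam n" "w2 \<in> U_tilde sc Lam n"
  shows "w1 \<circ> w2 \<in> U_tilde sc Lam n"
proof -
  have a1: "Vector_Spaces.linear sc sc (\<lambda>x. w1 x - x)" "raises n (\<lambda>x. w1 x - x)"
    and a2: "Vector_Spaces.linear sc sc (\<lambda>x. w2 x - x)" "raises n (\<lambda>x. w2 x - x)"
    using assms(2,3) unfolding U_tilde_iff by auto
  have w2: "Vector_Spaces.linear sc sc w2" "raises 0 w2"
    using linear_of_U_tilde[OF assms(3)] raises_ident_plus[OF assms(1) a2(2)] .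
  have "Vector_Spaces.linear sc sc (\<lambda>x. (w1 (w2 x) - w2 x) + (w2 x - x))"
    using endo.linear_compose_add[OF Vector_Spaces.linear_compose[OF w2(1) a1(1)] a2(1)]
    by (simp add: o_def)
  moreover have "raises n (\<lambda>x. (w1 (w2 x) - w2 x) + (w2 x - x))"
    using raises_add[OF raises_comp[OF a1(2) w2(2), simplified] a2(2)] by simp
  ultimately show ?thesis unfolding U_tilde_iff by (simp add: o_def)
qed

end

section \<open>Newton iteration for the inverse square root\<close>

fun newton_poly :: "nat \<Rightarrow> 'a::field poly" where
  "newton_poly 0 = 1"
| "newton_poly (Suc j) = newton_poly j * (1 - smult (inverse 2) ([:0, 1:] * newton_poly j ^ 2 - 1))"

definition newton_error :: "nat \<Rightarrow> 'a::field poly" where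
  "newton_error j = [:0, 1:] * newton_poly j ^ 2 - 1"

lemma newton_poly_Suc_eq:
  "newton_poly (Suc j) = newton_poly j - smult (inverse 2) (newton_poly j * newton_error j)"
  by (simp add: newton_error_def algebra_simps)

lemma newton_poly_square: "newton_poly j * ([:0, 1:] * newton_poly j) = newton_error j + 1"
  by (simp add: newton_error_def power2_eq_square algebra_simps)

lemma newton_error_Suc:
  assumes "(2::'a::field) \<noteq> 0"
  shows "newton_error (Suc j) =
    newton_error j ^ 2 * (smult (inverse 4) (newton_error j) - [:3 / 4:] :: 'a poly)"
proof -
  define C :: "'a poly" where "C = [:inverse 2:]"
  define X :: "'a poly" where "X = [:0, 1:]"
  define P E :: "'a poly" where "P = newton_poly j" and "E = newton_error j"
  have E: "E = X * P ^ 2 - 1" unfolding E_def P_def X_def newton_error_def ..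
  have four: "(4::'a) = 2 * 2" by simp
  then have "(4::'a) \<noteq> 0" using assms by (metis mult_eq_0_iff)
  have CC: "C + C = 1" unfolding C_def using assms by (simp add: one_pCons field_simps)
  have "newton_error (Suc j) = X * (P * (1 - C * E)) ^ 2 - 1"
    by (simp add: newton_error_def C_def X_def P_def E_def)
  also have "\<dots> = E ^ 2 * (C * C * E - (1 - C * C))"
    unfolding E using CC by algebra
  also have "C * C = [:inverse 4:]"
    unfolding C_def using four by (simp add: inverse_mult_distrib)
  also have "1 - [:inverse 4:] = [:3 / 4 :: 'a:]"
    using \<open>(4::'a) \<noteq> 0\<close> by (simp add: one_pCons field_simps)
  finally show ?thesis unfolding E_def by simp
qed

locale linear_endomorphism = vector_space sc
  for sc :: "'a::field \<Rightarrow> 'v::ab_group_add \<Rightarrow> 'v" +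
  fixes g :: "'v \<Rightarrow> 'v"
  assumes linear_g: "Vector_Spaces.linear sc sc g"
begin

lemma g_add: "g (x + y) = g x + g y"
  and g_scale: "g (sc c x) = sc c (g x)"
  using linear_g by (simp_all add: Vector_Spaces.linear_iff)

lemma g_zero [simp]: "g 0 = 0"
  using g_scale[of 0 0] by simp

lemma g_diff: "g (x - y) = g x - g y"
  using g_add[of "x - y" y] by simp

definition poly_apply :: "'a poly \<Rightarrow> 'v \<Rightarrow> 'v" where
  "poly_apply P x = fold_coeffs (\<lambda>a y. sc a x + g y) P 0"

lemma poly_apply_0 [simp]: "poly_apply 0 x = 0"
  by (simp add: poly_apply_def)

lemma poly_apply_pCons: "poly_apply (pCons a P) x = sc a x + g (poly_apply P x)"
  by (cases "P = 0 \<and> a = 0") (auto simp: poly_apply_def fold_coeffs_def cCons_def)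

lemma poly_apply_const: "poly_apply [:a:] x = sc a x"
  by (simp add: poly_apply_pCons)

lemma poly_apply_1: "poly_apply 1 x = x"
  by (simp add: one_pCons poly_apply_const)

lemma poly_apply_X: "poly_apply [:0, 1:] x = g x"
  by (simp add: poly_apply_pCons)

lemma poly_apply_add: "poly_apply (P + Q) x = poly_apply P x + poly_apply Q x"
  by (induction P Q rule: poly_induct2)
    (simp_all add: poly_apply_pCons g_add scale_left_distrib algebra_simps)

lemma poly_apply_diff: "poly_apply (P - Q) x = poly_apply P x - poly_apply Q x"
  using poly_apply_add[of "P - Q" Q x] by simp

lemma poly_apply_smult: "poly_apply (smult a P) x = sc a (poly_apply P x)"
  by (induction P) (simp_all add: poly_apply_pCons g_scale scale_right_distrib mult.commute)

lemma poly_apply_mult: "poly_apply (P * Q) x = poly_apply P (poly_apply Q x)"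
  by (induction P) (simp_all add: poly_apply_pCons poly_apply_add poly_apply_smult)

lemma poly_apply_commute: "poly_apply P (poly_apply Q x) = poly_apply Q (poly_apply P x)"
  by (metis poly_apply_mult mult.commute)

lemma linear_poly_apply: "Vector_Spaces.linear sc sc (poly_apply P)"
proof -
  have "poly_apply P (x + y) = poly_apply P x + poly_apply P y"
    and "poly_apply P (sc c x) = sc c (poly_apply P x)" for x y c
    by (induction P) (simp_all add: poly_apply_pCons g_add g_scale scale_right_distrib
        algebra_simps)
  then show ?thesis
    by (simp add: Vector_Spaces.linear_iff vector_space_axioms)
qed

end

locale selfadjoint_unipotent =
  self_dual_lattice_space + linear_endomorphism sc g for g +
  fixes n :: int
  assumes odd_residual: "(2::'a) \<notin> val_ideal v"
    and selfadjoint_g: "selfadjoint g"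
    and unipotent: "raises n (\<lambda>x. g x - x)"
    and n_pos: "n \<ge> 1"
begin

lemma half_mem_val_ring: "inverse (2::'a) \<in> val_ring v"
  using val_ge_add[OF one_mem_val_ring one_mem_val_ring] odd_residual
  by (intro inverse_mem_val_ring) simp_all

lemma two_neq_0: "(2::'a) \<noteq> 0"
  using odd_residual by auto

lemma quarter_mem_val_ring: "inverse (4::'a) \<in> val_ring v" "3 / 4 \<in> val_ring v"
proof -
  have four: "(4::'a) = 2 * 2" by simp
  then have "inverse (4::'a) = inverse 2 * inverse 2"
    by (metis inverse_mult_distrib)
  then show "inverse (4::'a) \<in> val_ring v"
    using val_ge_mult[OF half_mem_val_ring half_mem_val_ring] by simp
  have "(4::'a) \<noteq> 0" using four two_neq_0 by (metis mult_eq_0_iff)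
  then have q: "(3 / 4 :: 'a) = 1 - inverse 4" by (simp add: field_simps)
  show "3 / 4 \<in> val_ring v"
    unfolding q by (rule val_ge_diff[OF one_mem_val_ring \<open>inverse 4 \<in> val_ring v\<close>])
qed

lemma rho_half: "rho (inverse 2) = inverse 2"
proof -
  have "rho 2 = 2" using rho_add[of 1 1] by simp
  then show ?thesis by (simp only: rho_inverse)
qed

lemma selfadjoint_poly_diff:
  "selfadjoint (poly_apply P) \<Longrightarrow> selfadjoint (poly_apply Q) \<Longrightarrow> selfadjoint (poly_apply (P - Q))"
  unfolding selfadjoint_def poly_apply_diff by (simp add: h_diff_left h_diff_right)

lemma selfadjoint_poly_mult:
  "selfadjoint (poly_apply P) \<Longrightarrow> selfadjoint (poly_apply Q) \<Longrightarrow> selfadjoint (poly_apply (P * Q))"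
  unfolding selfadjoint_def poly_apply_mult by (metis poly_apply_commute)

lemma selfadjoint_poly_smult:
  "rho c = c \<Longrightarrow> selfadjoint (poly_apply P) \<Longrightarrow> selfadjoint (poly_apply (smult c P))"
  unfolding selfadjoint_def poly_apply_smult by (simp add: mult.commute)

lemma selfadjoint_poly_1: "selfadjoint (poly_apply 1)"
  unfolding selfadjoint_def poly_apply_1 by simp

lemma selfadjoint_poly_X: "selfadjoint (poly_apply [:0, 1:])"
  using selfadjoint_g unfolding selfadjoint_def poly_apply_X .

lemma selfadjoint_newton_poly: "selfadjoint (poly_apply (newton_poly j))"
proof (induction j)
  case 0
  then show ?case using selfadjoint_poly_1 by simp
next
  case (Suc j)
  have "selfadjoint (poly_apply ([:0, 1:] * newton_poly j ^ 2 - 1))"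
    unfolding power2_eq_square
    by (intro selfadjoint_poly_diff selfadjoint_poly_mult selfadjoint_poly_X selfadjoint_poly_1 Suc)
  then have "selfadjoint (poly_apply (1 - smult (inverse 2) ([:0, 1:] * newton_poly j ^ 2 - 1)))"
    by (rule selfadjoint_poly_diff[OF selfadjoint_poly_1 selfadjoint_poly_smult[OF rho_half]])
  with Suc show ?case unfolding newton_poly.simps by (rule selfadjoint_poly_mult)
qed

lemma raises_g: "raises 0 g"
  by (rule raises_ident_plus[of n]) (use n_pos unipotent in simp_all)

lemma raises_newton_error: "raises (n * int (Suc j)) (poly_apply (newton_error j))"
proof (induction j)
  case 0
  have "poly_apply (newton_error 0) = (\<lambda>x. g x - x)"
    by (simp add: newton_error_def poly_apply_diff poly_apply_X poly_apply_1 fun_eq_iff)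
  then show ?case using unipotent by simp
next
  case (Suc j)
  let ?E = "poly_apply (newton_error j)"
  have "raises 0 ?E" using n_pos by (intro raises_antimono[OF _ Suc]) simp
  then have "raises 0 (\<lambda>x. sc (inverse 4) (?E x) - sc (3 / 4) x)"
    by (intro raises_diff raises_scale raises_ident quarter_mem_val_ring)
  with Suc have "raises (n * int (Suc j) + (n * int (Suc j) + 0))
      (\<lambda>x. ?E (?E (sc (inverse 4) (?E x) - sc (3 / 4) x)))"
    by (intro raises_comp)
  moreover have "poly_apply (newton_error (Suc j)) = (\<lambda>x. ?E (?E (sc (inverse 4) (?E x) - sc (3 / 4) x)))"
    unfolding newton_error_Suc[OF two_neq_0, of j]
    by (simp add: power2_eq_square poly_apply_mult poly_apply_diff poly_apply_smult
        poly_apply_const fun_eq_iff)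
  ultimately have "raises (2 * (n * int (Suc j))) (poly_apply (newton_error (Suc j)))"
    by simp
  moreover have "n * int (Suc (Suc j)) \<le> 2 * (n * int (Suc j))"
    using n_pos mult_nonneg_nonneg[of n "int j"] by (simp add: algebra_simps)
  ultimately show ?case using raises_antimono by blast
qed

lemma newton_poly_step:
  "poly_apply (newton_poly (Suc j)) x - poly_apply (newton_poly j) x =
     sc (- inverse 2) (poly_apply (newton_poly j) (poly_apply (newton_error j) x))"
  unfolding newton_poly_Suc_eq poly_apply_diff poly_apply_smult poly_apply_mult
  by (simp add: scale_minus_left)

lemma raises_newton_poly: "raises 0 (poly_apply (newton_poly j))"
proof (induction j)
  case 0
  show ?case using raises_ident by (simp add: poly_apply_1)
next
  case (Suc j)
  have "raises 0 (poly_apply (newton_error j))"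
    using n_pos by (intro raises_antimono[OF _ raises_newton_error]) simp
  then have "raises 0 (\<lambda>x. sc (- inverse 2) (poly_apply (newton_poly j) (poly_apply (newton_error j) x)))"
    using raises_comp[OF Suc] by (intro raises_scale val_ge_uminus half_mem_val_ring) simp
  from raises_add[OF Suc this]
  have "raises 0 (\<lambda>x. poly_apply (newton_poly j) x +
      sc (- inverse 2) (poly_apply (newton_poly j) (poly_apply (newton_error j) x)))" .
  moreover have "poly_apply (newton_poly (Suc j)) = (\<lambda>x. poly_apply (newton_poly j) x +
      sc (- inverse 2) (poly_apply (newton_poly j) (poly_apply (newton_error j) x)))"
    by (rule ext) (metis newton_poly_step diff_add_cancel add.commute)
  ultimately show ?case by (simp only:)
qed

lemma raises_newton_step:
  "raises (n * int (Suc j)) (\<lambda>x. poly_apply (newton_poly (Suc j)) x - poly_apply (newton_poly j) x)"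
  unfolding newton_poly_step
  using raises_comp[OF raises_newton_poly raises_newton_error]
  by (intro raises_scale val_ge_uminus half_mem_val_ring) simp

lemma newton_step_mem:
  "x \<in> Lam s \<Longrightarrow> s + n * int (Suc i) \<ge> t \<Longrightarrow>
    poly_apply (newton_poly (Suc i)) x - poly_apply (newton_poly i) x \<in> Lam t"
  using raisesD[OF raises_newton_step] lattice_antimono by blast

lemma ex_newton_limit: "\<exists>L. lattice_limit (\<lambda>j. poly_apply (newton_poly j) x) L"
proof (rule lattice_cauchy_limit)
  fix t
  obtain s where x: "x \<in> Lam s" using lattice_exhaustive by blast
  have "t \<le> s + n * int (Suc j)" if "nat (t - s) \<le> j" for j
  proof -
    have "int (Suc j) \<le> n * int (Suc j)" using mult_right_mono[OF n_pos, of "int (Suc j)"] by simp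
    with that show ?thesis by linarith
  qed
  then show "eventually (\<lambda>j. poly_apply (newton_poly (Suc j)) x - poly_apply (newton_poly j) x \<in> Lam t)
      sequentially"
    unfolding eventually_sequentially using newton_step_mem[OF x] by blast
qed

definition inverse_sqrt where
  "inverse_sqrt x = (SOME L. lattice_limit (\<lambda>j. poly_apply (newton_poly j) x) L)"

lemma inverse_sqrt_limit: "lattice_limit (\<lambda>j. poly_apply (newton_poly j) x) (inverse_sqrt x)"
  unfolding inverse_sqrt_def using ex_newton_limit by (rule someI_ex)

lemma linear_inverse_sqrt: "Vector_Spaces.linear sc sc inverse_sqrt"
proof -
  have "lattice_limit (\<lambda>j. poly_apply (newton_poly j) (x + y)) (inverse_sqrt x + inverse_sqrt y)"
    for x y
    using lattice_limit_add[OF inverse_sqrt_limit inverse_sqrt_limit] linear_poly_apply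
    by (simp add: Vector_Spaces.linear_iff)
  moreover have "lattice_limit (\<lambda>j. poly_apply (newton_poly j) (sc c x)) (sc c (inverse_sqrt x))"
    for c x
    using lattice_limit_scale[OF inverse_sqrt_limit] linear_poly_apply
    by (simp add: Vector_Spaces.linear_iff)
  ultimately show ?thesis
    using lattice_limit_unique[OF inverse_sqrt_limit]
    by (simp add: Vector_Spaces.linear_iff vector_space_axioms)
qed

lemma inverse_sqrt_approx:
  assumes x: "x \<in> Lam s"
  shows "inverse_sqrt x - poly_apply (newton_poly j) x \<in> Lam (s + n * int (Suc j))"
proof -
  let ?t = "s + n * int (Suc j)"
  have "poly_apply (newton_poly i) x - poly_apply (newton_poly j) x \<in> Lam ?t" if "j \<le> i" for i
    using lattice_telescope[of j "\<lambda>i. poly_apply (newton_poly i) x" ?t, OF _ order_refl that]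
      newton_step_mem[OF x] n_pos by (simp add: mult_left_mono)
  moreover obtain N where "\<And>i. N \<le> i \<Longrightarrow> inverse_sqrt x - poly_apply (newton_poly i) x \<in> Lam ?t"
    using inverse_sqrt_limit[of x] unfolding lattice_limit_def eventually_sequentially by blast
  ultimately have "(inverse_sqrt x - poly_apply (newton_poly (max N j)) x) +
      (poly_apply (newton_poly (max N j)) x - poly_apply (newton_poly j) x) \<in> Lam ?t"
    by (intro lattice_add) simp_all
  then show ?thesis by simp
qed

lemma raises_inverse_sqrt_minus_ident: "raises n (\<lambda>x. inverse_sqrt x - x)"
  using inverse_sqrt_approx[of _ _ 0] by (intro raisesI) (simp add: poly_apply_1)

lemma raises_inverse_sqrt: "raises 0 inverse_sqrt"
  by (rule raises_ident_plus[OF _ raises_inverse_sqrt_minus_ident]) (use n_pos in simp)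

lemma newton_poly_normalizes:
  "h (poly_apply (newton_poly j) x) (g (poly_apply (newton_poly j) y)) =
     h x y + h x (poly_apply (newton_error j) y)"
proof -
  have "h (poly_apply (newton_poly j) x) (g (poly_apply (newton_poly j) y)) =
      h x (poly_apply (newton_poly j) (g (poly_apply (newton_poly j) y)))"
    using selfadjoint_newton_poly unfolding selfadjoint_def by blast
  also have "\<dots> = h x (poly_apply (newton_poly j * ([:0, 1:] * newton_poly j)) y)"
    by (simp only: poly_apply_mult poly_apply_X)
  also have "\<dots> = h x y + h x (poly_apply (newton_error j) y)"
    unfolding newton_poly_square poly_apply_add poly_apply_1 h_add_right by (rule add.commute)
  finally show ?thesis .
qed

text \<open>Splitting the defect along the \<open>j\<close>-th Newton iterate, self-duality puts all three terms
  into \<open>val_ge v (m + 1)\<close> once \<open>j\<close> is large.\<close>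

lemma inverse_sqrt_normalizes: "h (inverse_sqrt x) (g (inverse_sqrt y)) = h x y"
proof -
  obtain s where x: "x \<in> Lam s" and y: "y \<in> Lam s" using lattice_common by blast
  let ?D = "h (inverse_sqrt x) (g (inverse_sqrt y)) - h x y"
  have "?D \<in> val_ge v (int m + 1)" for m
  proof -
    define j where "j = nat (u - 2 * s + int m * e)"
    let ?t = "s + n * int (Suc j)"
    let ?P = "poly_apply (newton_poly j)" and ?E = "poly_apply (newton_error j)"
    have "int (Suc j) \<le> n * int (Suc j)" using mult_right_mono[OF n_pos, of "int (Suc j)"] by simp
    then have t: "u - s + int m * e \<le> ?t" unfolding j_def by linarith
    have "g (inverse_sqrt y) \<in> Lam s"
      using raisesD[OF raises_g raisesD[OF raises_inverse_sqrt y]] by simp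
    then have 1: "h (inverse_sqrt x - ?P x) (g (inverse_sqrt y)) \<in> val_ge v (int m + 1)"
      using h_lattice_mem_val_ge(1)[OF _ inverse_sqrt_approx[OF x] t] by blast
    have "?P x \<in> Lam s" using raisesD[OF raises_newton_poly x] by simp
    moreover have "g (inverse_sqrt y - ?P y) \<in> Lam ?t"
      using raisesD[OF raises_g inverse_sqrt_approx[OF y]] by simp
    ultimately have 2: "h (?P x) (g (inverse_sqrt y - ?P y)) \<in> val_ge v (int m + 1)"
      using h_lattice_mem_val_ge(2)[OF _ _ t] by blast
    have 3: "h x (?E y) \<in> val_ge v (int m + 1)"
      using h_lattice_mem_val_ge(2)[OF x raisesD[OF raises_newton_error y] t] .
    have "?D = h (inverse_sqrt x - ?P x) (g (inverse_sqrt y)) +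
        h (?P x) (g (inverse_sqrt y - ?P y)) + h x (?E y)"
      using newton_poly_normalizes[of j x y] by (simp add: h_diff_left h_diff_right g_diff)
    then show ?thesis using 1 2 3 by (simp add: val_ge_add)
  qed
  moreover have "val_ge v (int (nat k) + 1) \<subseteq> val_ge v k" for k
    by (rule val_ge_antimono) simp
  ultimately have "?D \<in> val_ge v k" for k by blast
  then show ?thesis using mem_all_val_ge_eq_0[of ?D] by simp
qed

lemma inverse_sqrt_mem_U_tilde: "inverse_sqrt \<in> U_tilde sc Lam n"
  unfolding U_tilde_iff
  using endo.linear_compose_sub[OF linear_inverse_sqrt linear_ident] raises_inverse_sqrt_minus_ident
  by simp

end

lemma ident_mem_U_tilde:
  assumes "vector_space sc" "\<And>s. 0 \<in> Lam s"
  shows "(\<lambda>x. x) \<in> U_tilde sc Lam n"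
proof -
  have "(\<lambda>_. 0) \<in> a_n sc Lam n"
    using assms module.scale_zero_right[OF assms(1)[folded module_iff_vector_space]]
    unfolding a_n_def by (auto simp: Vector_Spaces.linear_iff)
  then show ?thesis unfolding U_tilde_def by force
qed

context self_dual_lattice_space
begin

lemma ex_normalizing_U_tilde:
  assumes "(2::'a) \<notin> val_ideal v" "selfadjoint g" "g \<in> U_tilde sc Lam n" "n \<ge> 1"
  shows "\<exists>k\<in>U_tilde sc Lam n. \<forall>x y. h (k x) (g (k y)) = h x y"
proof -
  interpret selfadjoint_unipotent v sc rho eps h Lam p e u S0 g n
    using assms linear_of_U_tilde[OF assms(3)] U_tilde_iff[of g n]
    by unfold_locales (simp_all add: Vector_Spaces.linear_iff)
  show ?thesis using inverse_sqrt_mem_U_tilde inverse_sqrt_normalizes by blast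
qed

lemma ident_mem_U_tilde_image:
  assumes "Vector_Spaces.linear sc sc' f"
  shows "(\<lambda>x. x) \<in> U_tilde sc' (\<lambda>s. f ` Lam s) n"
proof (rule ident_mem_U_tilde)
  show "vector_space sc'" using assms by (simp add: Vector_Spaces.linear_iff)
  have "f 0 = 0" using assms by (simp add: Vector_Spaces.linear_iff_module_hom module_hom.zero)
  then show "0 \<in> f ` Lam s" for s using lattice_zero by (metis imageI)
qed

end

lemma U_tilde_conj:
  assumes f: "Vector_Spaces.linear sc sc' f" "bij f"
    and w: "w \<in> U_tilde sc' (\<lambda>s. f ` Lam s) n"
  shows "inv f \<circ> w \<circ> f \<in> U_tilde sc Lam n"
proof -
  obtain a where w_eq: "w = (\<lambda>y. y + a y)" and a: "Vector_Spaces.linear sc' sc' a"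
    and a_raises: "\<And>s. a ` f ` Lam s \<subseteq> f ` Lam (s + n)"
    using w unfolding U_tilde_def a_n_def by blast
  have "vector_space sc" "vector_space sc'"
    using f(1) by (simp_all add: Vector_Spaces.linear_iff)
  then have inv_f: "Vector_Spaces.linear sc' sc (inv f)"
    using f module_pair.bij_module_hom_imp_inv_module_hom[of sc sc' sc sc' f]
    by (simp add: module_pair_def Vector_Spaces.linear_iff_module_hom module_iff_vector_space)
  define b where "b = inv f \<circ> a \<circ> f"
  have "b \<in> a_n sc Lam n"
    unfolding a_n_def b_def
  proof (intro CollectI conjI allI)
    show "Vector_Spaces.linear sc sc (inv f \<circ> a \<circ> f)"
      using Vector_Spaces.linear_compose[OF Vector_Spaces.linear_compose[OF f(1) a] inv_f]
      by (simp add: comp_assoc)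
    show "(inv f \<circ> a \<circ> f) ` Lam s \<subseteq> Lam (s + n)" for s
    proof
      fix y assume "y \<in> (inv f \<circ> a \<circ> f) ` Lam s"
      then obtain x where "x \<in> Lam s" "y = inv f (a (f x))" by auto
      moreover from this obtain z where "z \<in> Lam (s + n)" "a (f x) = f z"
        using a_raises[of s] by blast
      ultimately show "y \<in> Lam (s + n)" using bij_is_inj[OF f(2)] by (simp add: inv_f_f)
    qed
  qed
  moreover have "inv f \<circ> w \<circ> f = (\<lambda>x. x + b x)"
  proof
    fix x
    have "inv f (f x + a (f x)) = inv f (f x) + inv f (a (f x))"
      using inv_f by (simp add: Vector_Spaces.linear_iff)
    then show "(inv f \<circ> w \<circ> f) x = x + b x"
      unfolding w_eq b_def using bij_is_inj[OF f(2)] by (simp add: inv_f_f)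
  qed
  ultimately show ?thesis unfolding U_tilde_def by blast
qed

theorem corollary3p2:
  fixes v :: "'a::field \<Rightarrow> int" and rho :: "'a \<Rightarrow> 'a" and eps :: 'a
    and sc :: "'a \<Rightarrow> 'v::ab_group_add \<Rightarrow> 'v" and h :: "'v \<Rightarrow> 'v \<Rightarrow> 'a"
    and sc' :: "'a \<Rightarrow> 'w::ab_group_add \<Rightarrow> 'w" and h' :: "'w \<Rightarrow> 'w \<Rightarrow> 'a"
    and n :: nat and Lam :: "int \<Rightarrow> 'v set" and f :: "'v \<Rightarrow> 'w"
  assumes F: "nonarch_local_field v" "odd_residual_char v"
    and rho: "field_automorphism rho" "\<forall>x. rho (rho x) = x"
             "\<forall>x. x \<noteq> 0 \<longrightarrow> v (rho x) = v x"
    and eps: "eps = 1 \<or> eps = -1"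
    and V: "finite_dim_space sc" "eps_hermitian rho eps sc h"
    and V': "finite_dim_space sc'" "eps_hermitian rho eps sc' h'"
    and n: "n > 0"
    and Lam: "self_dual_lattice_sequence v sc h Lam"
    and f: "Vector_Spaces.linear sc sc' f" "bij f"
    and fLam: "self_dual_lattice_sequence v sc' h' (\<lambda>s. f ` Lam s)"
    and sig: "\<exists>u\<in>U_tilde sc Lam (int n). \<exists>u'\<in>U_tilde sc' (\<lambda>s. f ` Lam s) (int n).
                sigma_adj h h' f = u \<circ> inv f \<circ> u'"
  shows "\<exists>phi. isometry sc sc' h h' phi \<and>
           (\<exists>u'\<in>U_tilde sc' (\<lambda>s. f ` Lam s) (int n). \<exists>u\<in>U_tilde sc Lam (int n).
              phi = u' \<circ> f \<circ> u)"
proof -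
  obtain p e u S0 where "self_dual_lattice_space v sc rho eps h Lam p e u S0"
    using self_dual_lattice_spaceI V(1)[unfolded finite_dim_space_def] rho(1,3) eps V(2) F(1) Lam
    by blast
  then interpret L: self_dual_lattice_space v sc rho eps h Lam p e u S0 .
  define g where "g = sigma_adj h h' f \<circ> f"
  obtain w w' where w: "w \<in> U_tilde sc Lam (int n)" "w' \<in> U_tilde sc' (\<lambda>s. f ` Lam s) (int n)"
    and "g = w \<circ> (inv f \<circ> w' \<circ> f)"
    using sig unfolding g_def by (auto simp: comp_assoc)
  then have "g \<in> U_tilde sc Lam (int n)"
    using L.U_tilde_comp[OF _ w(1) U_tilde_conj[OF f w(2)]] by simp
  moreover have "L.selfadjoint g"
    unfolding g_def by (rule L.sigma_adj_comp_selfadjoint[OF L.coordinates(1,2) f(1) V'(2)])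
  ultimately obtain k where k: "k \<in> U_tilde sc Lam (int n)" "\<And>x y. h (k x) (g (k y)) = h x y"
    using L.ex_normalizing_U_tilde F(2) n unfolding odd_residual_char_def by force
  have "isometry sc sc' h h' (f \<circ> k)"
    using L.isometry_comp_normalizing[OF L.coordinates(1,2) f V'(2) L.linear_of_U_tilde[OF k(1)]]
      k(2)
    unfolding g_def by simp
  moreover have "f \<circ> k = (\<lambda>x. x) \<circ> f \<circ> k" by (simp add: o_def)
  ultimately show ?thesis using k(1) L.ident_mem_U_tilde_image[OF f(1)] by blast
qed

end
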